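(* Let $(X,Y)$ be a random variable with values in $[0,1]^2$ such that $X+Y\le 1$ almost surely, with $\mu_X=\mathbb E X$, $\mu_Y=\mathbb E Y$. Let $(X_1,Y_1),\dots,(X_n,Y_n)$ be $n$ independent copies of $(X,Y)$, and $\mathbf X=(X_1,\dots,X_n)$, $\mathbf Y=(Y_1,\dots,Y_n)$. Let $(X',Y')$ be a random variable taking the values $(1,0)$, $(0,1)$, $(0,0)$ with probabilities $\mu_X$, $\mu_Y$, $1-\mu_X-\mu_Y$ respectively, and let $\mathbf X',\mathbf Y'\in\{0,1\}^n$ be formed from $n$ independent copies of $(X',Y')$ in the same way. Then for every convex function $f:[0,1]^n\times[0,1]^n\to\mathbb R$, $$\mathbb E\big[f(\mathbf X,\mathbf Y)\big]\ \le\ \mathbb E\big[f(\mathbf X',\mathbf Y')\big].$$ *)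

theory Defs
  imports "HOL-Probability.Probability"
begin

text \<open>The domain [0,1]^n x [0,1]^n, with n = CARD('n).\<close>
definition unit_cube_pair :: "((real^'n) \<times> (real^'n)) set" where
  "unit_cube_pair = {(x, y). \<forall>i. x $ i \<in> {0..1} \<and> y $ i \<in> {0..1}}"

end

theory Submission
  imports Defs
begin

text \<open>Each pair (X_i, Y_i) lies in the triangle with vertices (1,0), (0,1), (0,0), so it is the
  convex combination of these vertices with barycentric weights X_i, Y_i, 1 - X_i - Y_i.
  Multiplying these weights over the coordinates writes (X, Y) as a convex combination of the
  3^n vertex points of the product of triangles, and Jensen's inequality bounds f(X, Y) by the
  multi-affine interpolant of f at these vertices. By independence, the expectation of the
  interpolant is the interpolant at the means, which are the same for (X, Y) and (X', Y').
  Since (X', Y') only takes vertex values, where the interpolant equals f, its expectation is the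
  right-hand side. Integrability of f(X, Y) rests on convex functions on a cube being bounded and
  upper semicontinuous.\<close>

section \<open>Convex functions on the unit cube\<close>

lemma convex_on_unit_cube_bounded_above:
  fixes f :: "'a::euclidean_space \<Rightarrow> real"
  assumes "convex_on (cbox 0 One) f"
  obtains K where "\<forall>z\<in>cbox 0 One. f z \<le> K"
proof -
  obtain S :: "'a set" where S: "finite S" "cbox 0 One = convex hull S"
    by (rule unit_cube_convex_hull)
  have "\<forall>x\<in>S. f x \<le> (\<Sum>y\<in>S. \<bar>f y\<bar>)"
    using S(1) by (metis abs_ge_self abs_ge_zero dual_order.trans member_le_sum)
  then show ?thesis
    using that convex_on_convex_hull_bound assms unfolding S(2) by blast
qed

lemma convex_on_unit_cube_bounded:
  fixes f :: "'a::euclidean_space \<Rightarrow> real"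
  assumes f: "convex_on (cbox 0 One) f"
  obtains B where "\<forall>z\<in>cbox 0 One. \<bar>f z\<bar> \<le> B"
proof -
  obtain K where K: "\<forall>z\<in>cbox 0 One. f z \<le> K"
    using convex_on_unit_cube_bounded_above[OF f] by blast
  define c :: 'a where "c = (1/2) *\<^sub>R One"
  have "2 * f c - K \<le> f z" if z: "z \<in> cbox 0 One" for z
  proof -
    have z': "One - z \<in> cbox 0 One"
      using z by (auto simp: mem_box inner_diff_left)
    have "c = (1 - 1/2) *\<^sub>R z + (1/2) *\<^sub>R (One - z)"
      by (simp add: c_def algebra_simps)
    then have "f c \<le> (1 - 1/2) * f z + (1/2) * f (One - z)"
      using convex_onD[OF f, of "1/2" z "One - z"] z z' by simp
    moreover have "f (One - z) \<le> K" using K z' by blast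
    ultimately show ?thesis by (simp add: field_simps)
  qed
  with K have "\<forall>z\<in>cbox 0 One. \<bar>f z\<bar> \<le> \<bar>K\<bar> + \<bar>2 * f c - K\<bar>"
    by fastforce
  then show ?thesis using that by blast
qed

lemma unit_interval_radial_step:
  fixes t t' r d :: real
  assumes "t \<in> {0..1}" "t' \<in> {0..1}" "0 < r" "r \<le> 1" "0 < t \<Longrightarrow> r \<le> t" "t < 1 \<Longrightarrow> r \<le> 1 - t"
    and "\<bar>t' - t\<bar> \<le> d" "0 < d"
  shows "t + r / d * (t' - t) \<in> {0..1}"
proof -
  define s where "s = r / d * (t' - t)"
  have "\<bar>s\<bar> \<le> r"
    using assms(3,7,8) by (simp add: s_def abs_mult divide_le_eq mult.commute mult_left_mono)
  moreover have "0 \<le> s" if "t = 0"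
    using that assms(2,3,8) unfolding s_def by (intro mult_nonneg_nonneg) auto
  moreover have "s \<le> 0" if "t = 1"
    using that assms(2,3,8) unfolding s_def by (intro mult_nonneg_nonpos) auto
  ultimately have "t + s \<in> {0..1}"
    using assms(1,4,5,6) by (cases "t = 0 \<or> t = 1") (auto simp: abs_le_iff)
  then show ?thesis by (simp add: s_def)
qed

lemma unit_cube_radial_extension:
  fixes z :: "'a::euclidean_space"
  assumes z: "z \<in> cbox 0 One"
  obtains r where "0 < r"
    and "\<And>z'. z' \<in> cbox 0 One \<Longrightarrow> z' \<noteq> z \<Longrightarrow> z + (r / dist z' z) *\<^sub>R (z' - z) \<in> cbox 0 One"
proof -
  define margin where "margin t = (if 0 < t \<and> t < 1 then min t (1 - t) else 1)" for t :: real
  define r where "r = Min ((\<lambda>i. margin (z \<bullet> i)) ` Basis)"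
  have z01: "z \<bullet> i \<in> {0..1}" if "i \<in> Basis" for i
    using z that by (auto simp: mem_box)
  have r_le: "r \<le> margin (z \<bullet> i)" if "i \<in> Basis" for i
    using that by (simp add: r_def)
  have "0 < margin t" if "t \<in> {0..1}" for t
    using that by (auto simp: margin_def)
  with z01 have "0 < r"
    unfolding r_def by (subst Min_gr_iff) auto
  moreover have "z + (r / dist z' z) *\<^sub>R (z' - z) \<in> cbox 0 One"
    if z': "z' \<in> cbox 0 One" "z' \<noteq> z" for z'
  proof -
    have "z \<bullet> i + r / dist z' z * (z' \<bullet> i - z \<bullet> i) \<in> {0..1}" if i: "i \<in> Basis" for i
    proof (rule unit_interval_radial_step)
      show "z \<bullet> i \<in> {0..1}" "z' \<bullet> i \<in> {0..1}"
        using z01 z' i by (auto simp: mem_box)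
      show "0 < r" by fact
      show "r \<le> 1" "0 < z \<bullet> i \<Longrightarrow> r \<le> z \<bullet> i" "z \<bullet> i < 1 \<Longrightarrow> r \<le> 1 - z \<bullet> i"
        using r_le[OF i] z01[OF i] by (auto simp: margin_def split: if_splits)
      show "\<bar>z' \<bullet> i - z \<bullet> i\<bar> \<le> dist z' z"
        using Basis_le_norm[OF i, of "z' - z"] by (simp add: dist_norm inner_diff_left)
      show "0 < dist z' z"
        using z' by simp
    qed
    then show ?thesis
      by (simp add: mem_box algebra_simps)
  qed
  ultimately show ?thesis using that by blast
qed

text \<open>If from z one can always move the fixed distance r towards z' inside S, reaching w, then
  z' lies on the segment from z to w at parameter dist z' z / r, and convexity gives
  f z' \<le> f z + (dist z' z / r) (K - f z).\<close>

lemma convex_on_upper_semicontinuous_at: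
  fixes f :: "'a::real_normed_vector \<Rightarrow> real"
  assumes f: "convex_on S f" and K: "\<forall>z\<in>S. f z \<le> K"
    and z: "z \<in> S" and r: "0 < r" "\<And>z'. z' \<in> S \<Longrightarrow> z' \<noteq> z \<Longrightarrow> z + (r / dist z' z) *\<^sub>R (z' - z) \<in> S"
    and a: "f z < a"
  shows "\<exists>e>0. \<forall>z'\<in>S. dist z' z < e \<longrightarrow> f z' < a"
proof -
  have Kz: "f z \<le> K" using K z by blast
  define e where "e = min r (r * (a - f z) / (K - f z + 1))"
  have "f z' < a" if z': "z' \<in> S" "dist z' z < e" for z'
  proof (cases "z' = z")
    case True
    then show ?thesis using a by simp
  next
    case False
    define l where "l = dist z' z / r"
    define w where "w = z + (r / dist z' z) *\<^sub>R (z' - z)"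
    have l: "0 < l" "l \<le> 1"
      using False z' r by (auto simp: l_def e_def)
    have "z' = (1 - l) *\<^sub>R z + l *\<^sub>R w"
      using False r by (simp add: l_def w_def algebra_simps)
    then have "f z' \<le> (1 - l) * f z + l * f w"
      using convex_onD[OF f, of l z w] l z r(2)[OF z'(1) False] by (simp add: w_def)
    also have "\<dots> \<le> f z + l * (K - f z)"
      using K r(2)[OF z'(1) False] l by (simp add: w_def algebra_simps)
    also have "\<dots> < a"
    proof -
      have "l < (a - f z) / (K - f z + 1)"
        using z'(2) r Kz by (simp add: l_def e_def divide_less_eq mult.commute)
      then have "l * (K - f z + 1) < a - f z"
        using Kz by (simp add: less_divide_eq)
      then show ?thesis using l by (simp add: algebra_simps)
    qed
    finally show ?thesis .
  qed
  moreover have "0 < e"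
    using r a Kz by (simp add: e_def)
  ultimately show ?thesis by blast
qed

lemma convex_on_unit_cube_sublevel_openin:
  fixes f :: "'a::euclidean_space \<Rightarrow> real"
  assumes f: "convex_on (cbox 0 One) f"
  shows "openin (top_of_set (cbox 0 One)) {z \<in> cbox 0 One. f z < a}"
proof -
  obtain K where K: "\<forall>z\<in>cbox 0 One. f z \<le> K"
    using convex_on_unit_cube_bounded_above[OF f] by blast
  show ?thesis
    unfolding openin_euclidean_subtopology_iff
  proof (intro conjI ballI)
    fix z assume "z \<in> {z \<in> cbox 0 One. f z < a}"
    then have z: "z \<in> cbox 0 One" "f z < a" by auto
    obtain r where "0 < r"
      "\<And>z'. z' \<in> cbox 0 One \<Longrightarrow> z' \<noteq> z \<Longrightarrow> z + (r / dist z' z) *\<^sub>R (z' - z) \<in> cbox 0 One"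
      using unit_cube_radial_extension[OF z(1)] by blast
    from convex_on_upper_semicontinuous_at[OF f K z(1) this z(2)]
    show "\<exists>e>0. \<forall>z'\<in>cbox 0 One. dist z' z < e \<longrightarrow> z' \<in> {z \<in> cbox 0 One. f z < a}"
      by auto
  qed auto
qed

lemma borel_measurable_comp_upper_semicontinuous:
  fixes f :: "'a::topological_space \<Rightarrow> real"
  assumes usc: "\<And>a. openin (top_of_set S) {z \<in> S. f z < a}"
    and h: "h \<in> borel_measurable M" and hS: "\<forall>\<omega>\<in>space M. h \<omega> \<in> S"
  shows "(\<lambda>\<omega>. f (h \<omega>)) \<in> borel_measurable M"
proof (subst borel_measurable_iff_less, intro allI)
  fix a
  obtain T where T: "open T" "{z \<in> S. f z < a} = S \<inter> T"
    using usc[of a] by (auto simp: openin_open)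
  have "{\<omega> \<in> space M. f (h \<omega>) < a} = h -` T \<inter> space M"
    using T(2) hS by blast
  also have "\<dots> \<in> sets M"
    using measurable_sets[OF h] T(1) by simp
  finally show "{\<omega> \<in> space M. f (h \<omega>) < a} \<in> sets M" .
qed

lemma (in finite_measure) integrable_convex_on_unit_cube:
  fixes f :: "'b::euclidean_space \<Rightarrow> real"
  assumes f: "convex_on (cbox 0 One) f"
    and h: "h \<in> borel_measurable M" and hS: "\<forall>\<omega>\<in>space M. h \<omega> \<in> cbox 0 One"
  shows "integrable M (\<lambda>\<omega>. f (h \<omega>))"
proof -
  obtain B where "\<forall>z\<in>cbox 0 One. \<bar>f z\<bar> \<le> B"
    using convex_on_unit_cube_bounded[OF f] by blast
  moreover have "(\<lambda>\<omega>. f (h \<omega>)) \<in> borel_measurable M"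
    by (rule borel_measurable_comp_upper_semicontinuous[OF convex_on_unit_cube_sublevel_openin[OF f] h hS])
  ultimately show ?thesis
    using hS by (intro integrable_const_bound[where B = B]) auto
qed

lemma mem_unit_cube_cart: "x \<in> cbox 0 One \<longleftrightarrow> (\<forall>i. x $ i \<in> {0..1})" for x :: "real^'n::finite"
  by (simp add: mem_box_cart flip: Cart_1)

lemma One_prod: "(One :: 'a::euclidean_space \<times> 'b::euclidean_space) = (One, One)"
  using sum_Basis_prod_eq[of id] by (simp add: prod_eq_iff fst_sum snd_sum)

lemma unit_cube_pair_eq_cbox: "unit_cube_pair = cbox 0 (One :: (real^'n::finite) \<times> (real^'n))"
  by (auto simp: unit_cube_pair_def One_prod zero_prod_def cbox_Pair_eq mem_unit_cube_cart)

section \<open>Product weights and the vertex interpolant\<close>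

lemma sum_PiE_prod_weights_marginal:
  fixes w :: "'i::finite \<Rightarrow> 'l \<Rightarrow> real"
  assumes "finite A" and w1: "\<And>i. (\<Sum>a\<in>A. w i a) = 1"
  shows "(\<Sum>v\<in>PiE UNIV (\<lambda>_. A). (\<Prod>i\<in>UNIV. w i (v i)) * g (v j)) = (\<Sum>a\<in>A. w j a * g a)"
proof -
  have "(\<Sum>v\<in>PiE UNIV (\<lambda>_. A). (\<Prod>i\<in>UNIV. w i (v i)) * g (v j))
      = (\<Sum>v\<in>PiE UNIV (\<lambda>_. A). \<Prod>i\<in>UNIV. w i (v i) * (if i = j then g (v i) else 1))"
    by (simp add: prod.distrib)
  also have "\<dots> = (\<Prod>i\<in>UNIV. \<Sum>a\<in>A. w i a * (if i = j then g a else 1))"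
    by (rule prod_sum_PiE[symmetric]) (use assms(1) in auto)
  also have "\<dots> = (\<Prod>i\<in>UNIV. if i = j then (\<Sum>a\<in>A. w j a * g a) else 1)"
    by (rule prod.cong) (auto simp: w1)
  also have "\<dots> = (\<Sum>a\<in>A. w j a * g a)"
    by simp
  finally show ?thesis .
qed

lemma convex_on_le_sum_PiE_prod_weights:
  fixes f :: "(real^'n::finite) \<times> (real^'n) \<Rightarrow> real" and A :: "(real \<times> real) set"
    and w :: "'n \<Rightarrow> real \<times> real \<Rightarrow> real"
  assumes f: "convex_on S f" and A: "finite A" "A \<noteq> {}"
    and vertices: "\<And>v. v \<in> PiE UNIV (\<lambda>_. A) \<Longrightarrow> (\<chi> i. fst (v i), \<chi> i. snd (v i)) \<in> S"
    and w0: "\<And>i a. a \<in> A \<Longrightarrow> 0 \<le> w i a"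
    and w1: "\<And>i. (\<Sum>a\<in>A. w i a) = 1"
    and x: "\<And>i. x $ i = (\<Sum>a\<in>A. w i a * fst a)"
    and y: "\<And>i. y $ i = (\<Sum>a\<in>A. w i a * snd a)"
  shows "f (x, y) \<le> (\<Sum>v\<in>PiE UNIV (\<lambda>_. A). (\<Prod>i\<in>UNIV. w i (v i)) * f (\<chi> i. fst (v i), \<chi> i. snd (v i)))"
proof -
  define V where "V = PiE (UNIV :: 'n set) (\<lambda>_. A)"
  define W where "W v = (\<Prod>i\<in>UNIV. w i (v i))" for v
  define P where "P v = ((\<chi> i. fst (v i)) :: real^'n, (\<chi> i. snd (v i)) :: real^'n)" for v :: "'n \<Rightarrow> real \<times> real"
  have marginal: "(\<Sum>v\<in>V. W v * g (v j)) = (\<Sum>a\<in>A. w j a * g a)" for g :: "real \<times> real \<Rightarrow> real" and j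
    unfolding V_def W_def by (rule sum_PiE_prod_weights_marginal[OF A(1) w1])
  have "x = (\<Sum>v\<in>V. W v *\<^sub>R fst (P v))" "y = (\<Sum>v\<in>V. W v *\<^sub>R snd (P v))"
    unfolding vec_eq_iff using marginal[of fst] marginal[of snd] by (simp_all add: P_def x y)
  then have "(x, y) = (\<Sum>v\<in>V. W v *\<^sub>R P v)"
    by (simp add: prod_eq_iff fst_sum snd_sum)
  moreover have "f (\<Sum>v\<in>V. W v *\<^sub>R P v) \<le> (\<Sum>v\<in>V. W v * f (P v))"
  proof (rule convex_on_sum[OF _ _ f])
    show "finite V" "V \<noteq> {}"
      using A by (auto simp: V_def finite_PiE PiE_eq_empty_iff)
    show "(\<Sum>v\<in>V. W v) = 1"
      using marginal[of "\<lambda>_. 1"] by (simp add: w1)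
    show "W v \<ge> 0" if "v \<in> V" for v
      unfolding W_def using that by (intro prod_nonneg w0) (auto simp: V_def PiE_iff)
    show "P v \<in> S" if "v \<in> V" for v
      using vertices that by (simp add: V_def P_def)
  qed
  ultimately have "f (x, y) \<le> (\<Sum>v\<in>V. W v * f (P v))"
    by simp
  then show ?thesis unfolding V_def W_def P_def .
qed

definition triangle_vertices :: "(real \<times> real) set" where
  "triangle_vertices = {(1, 0), (0, 1), (0, 0)}"

lemma finite_triangle_vertices [simp]: "finite triangle_vertices"
  by (simp add: triangle_vertices_def)

lemma triangle_vertex_unit_interval:
  assumes "p \<in> triangle_vertices"
  shows "fst p \<in> {0..1} \<and> snd p \<in> {0..1}"
  using assms by (auto simp: triangle_vertices_def)

text \<open>For a vertex v of the triangle, the barycentric coordinate of p belonging to v: a single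
  affine formula covers all three vertices.\<close>

definition barycentric_weight :: "real \<times> real \<Rightarrow> real \<times> real \<Rightarrow> real" where
  "barycentric_weight v p = fst v * fst p + snd v * snd p + (1 - fst v - snd v) * (1 - fst p - snd p)"

lemma barycentric_weight_vertex:
  assumes "v \<in> triangle_vertices" "p \<in> triangle_vertices"
  shows "barycentric_weight v p = (if v = p then 1 else 0)"
  using assms unfolding triangle_vertices_def by (elim insertE emptyE; simp add: barycentric_weight_def)

lemma barycentric_weight_nonneg:
  assumes "v \<in> triangle_vertices" "0 \<le> s" "0 \<le> t" "s + t \<le> 1"
  shows "0 \<le> barycentric_weight v (s, t)"
  using assms by (auto simp: triangle_vertices_def barycentric_weight_def)

lemma sum_triangle_vertices:
  "(\<Sum>v\<in>triangle_vertices. g v) = g (1, 0) + g (0, 1) + g (0, 0)"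
  by (simp add: triangle_vertices_def add.assoc)

lemma sum_barycentric_weight:
  "(\<Sum>v\<in>triangle_vertices. barycentric_weight v p) = 1"
  "(\<Sum>v\<in>triangle_vertices. barycentric_weight v p * fst v) = fst p"
  "(\<Sum>v\<in>triangle_vertices. barycentric_weight v p * snd v) = snd p"
  by (simp_all add: sum_triangle_vertices barycentric_weight_def algebra_simps)

text \<open>The multi-affine function on the product of triangles that agrees with f at the vertices.\<close>

definition vertex_interpolant :: "((real^'n::finite) \<times> (real^'n) \<Rightarrow> real) \<Rightarrow> (real^'n) \<times> (real^'n) \<Rightarrow> real" where
  "vertex_interpolant f z = (\<Sum>v\<in>PiE UNIV (\<lambda>_. triangle_vertices).
     (\<Prod>i\<in>UNIV. barycentric_weight (v i) (fst z $ i, snd z $ i)) * f (\<chi> i. fst (v i), \<chi> i. snd (v i)))"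

lemma convex_on_le_vertex_interpolant:
  fixes f :: "(real^'n::finite) \<times> (real^'n) \<Rightarrow> real"
  assumes f: "convex_on unit_cube_pair f"
    and xy: "\<And>i. 0 \<le> x $ i \<and> 0 \<le> y $ i \<and> x $ i + y $ i \<le> 1"
  shows "f (x, y) \<le> vertex_interpolant f (x, y)"
  unfolding vertex_interpolant_def fst_conv snd_conv
proof (rule convex_on_le_sum_PiE_prod_weights[OF f])
  show "finite triangle_vertices" "triangle_vertices \<noteq> {}"
    by (simp_all add: triangle_vertices_def)
  show "(\<chi> i. fst (v i), \<chi> i. snd (v i)) \<in> unit_cube_pair"
    if "v \<in> PiE UNIV (\<lambda>_. triangle_vertices)" for v :: "'n \<Rightarrow> real \<times> real"
    using that triangle_vertex_unit_interval by (simp add: unit_cube_pair_def PiE_iff)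
  show "0 \<le> barycentric_weight a (x $ i, y $ i)" if "a \<in> triangle_vertices" for i a
    using barycentric_weight_nonneg[OF that] xy[of i] by blast
qed (simp_all add: sum_barycentric_weight)

lemma vertex_interpolant_at_vertex:
  assumes z: "\<And>i. (fst z $ i, snd z $ i) \<in> triangle_vertices"
  shows "vertex_interpolant f z = f z"
proof -
  define v0 where "v0 i = (fst z $ i, snd z $ i)" for i
  have v0: "v0 \<in> PiE UNIV (\<lambda>_. triangle_vertices)"
    using z by (simp add: v0_def PiE_UNIV_domain)
  have "(\<Prod>i\<in>UNIV. barycentric_weight (v i) (fst z $ i, snd z $ i)) = (if v = v0 then 1 else 0)"
    if v: "v \<in> PiE UNIV (\<lambda>_. triangle_vertices)" for v
  proof -
    have weight: "barycentric_weight (v i) (fst z $ i, snd z $ i) = (if v i = v0 i then 1 else 0)" for i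
      using v z by (simp add: barycentric_weight_vertex v0_def PiE_iff)
    show ?thesis
    proof (cases "v = v0")
      case False
      then obtain j where "v j \<noteq> v0 j" by auto
      then have "\<exists>j\<in>UNIV. barycentric_weight (v j) (fst z $ j, snd z $ j) = 0"
        using weight by auto
      with False show ?thesis by (simp add: prod_zero)
    qed (use weight in simp)
  qed
  then have "vertex_interpolant f z = (\<Sum>v\<in>PiE UNIV (\<lambda>_. triangle_vertices).
      if v = v0 then f (\<chi> i. fst (v i), \<chi> i. snd (v i)) else 0)"
    unfolding vertex_interpolant_def by (intro sum.cong) auto
  also have "\<dots> = f z"
    using v0 by (simp add: finite_PiE v0_def)
  finally show ?thesis .
qed

section \<open>Expectations\<close>

lemma borel_measurable_barycentric_weight [measurable]:
  "barycentric_weight v \<in> borel_measurable borel"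
  unfolding barycentric_weight_def by (intro borel_measurable_continuous_onI continuous_intros)

lemma borel_measurable_fst_snd:
  "(fst :: real \<times> real \<Rightarrow> real) \<in> borel_measurable borel"
  "(snd :: real \<times> real \<Rightarrow> real) \<in> borel_measurable borel"
  by (intro borel_measurable_continuous_onI continuous_intros)+

lemma borel_measurable_pair_components:
  fixes U V :: "'a \<Rightarrow> real"
  assumes "(\<lambda>\<omega>. (U \<omega>, V \<omega>)) \<in> borel_measurable M"
  shows "U \<in> borel_measurable M" "V \<in> borel_measurable M"
  using measurable_compose[OF assms borel_measurable_fst_snd(1)]
    measurable_compose[OF assms borel_measurable_fst_snd(2)] by simp_all

lemma borel_measurable_vec_lambda:
  assumes "\<And>i. g i \<in> borel_measurable M"
  shows "(\<lambda>\<omega>. (\<chi> i. g i \<omega>) :: real^'n::finite) \<in> borel_measurable M"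
  using assms by (subst borel_measurable_euclidean_space) (auto simp: Basis_vec_def inner_axis)

lemma integral_comp_eq_if_distr_eq:
  fixes \<phi> :: "'b \<Rightarrow> real"
  assumes "distr M N g = distr M N h" "g \<in> measurable M N" "h \<in> measurable M N"
    and "\<phi> \<in> borel_measurable N"
  shows "(\<integral>\<omega>. \<phi> (g \<omega>) \<partial>M) = (\<integral>\<omega>. \<phi> (h \<omega>) \<partial>M)"
proof -
  have "(\<integral>\<omega>. \<phi> (g \<omega>) \<partial>M) = integral\<^sup>L (distr M N g) \<phi>"
    using assms(2,4) by (rule integral_distr[symmetric])
  also have "\<dots> = (\<integral>\<omega>. \<phi> (h \<omega>) \<partial>M)"
    unfolding assms(1) using assms(3,4) by (rule integral_distr)
  finally show ?thesis .
qed

lemma AE_comp_if_distr_eq: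
  assumes "distr M N g = distr M N h" "g \<in> measurable M N" "h \<in> measurable M N"
    and P: "{x \<in> space N. P x} \<in> sets N" and "AE \<omega> in M. P (h \<omega>)"
  shows "AE \<omega> in M. P (g \<omega>)"
proof -
  have "AE x in distr M N h. P x"
    using AE_distr_iff[OF assms(3) P] assms(5) by simp
  then show ?thesis
    using AE_distr_iff[OF assms(2) P] assms(1) by metis
qed

lemma integral_components_eq_if_distr_eq:
  fixes U V U0 V0 :: "'a \<Rightarrow> real"
  assumes "distr M borel (\<lambda>\<omega>. (U \<omega>, V \<omega>)) = distr M borel (\<lambda>\<omega>. (U0 \<omega>, V0 \<omega>))"
    and "(\<lambda>\<omega>. (U \<omega>, V \<omega>)) \<in> borel_measurable M" "(\<lambda>\<omega>. (U0 \<omega>, V0 \<omega>)) \<in> borel_measurable M"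
  shows "integral\<^sup>L M U = integral\<^sup>L M U0" "integral\<^sup>L M V = integral\<^sup>L M V0"
  using integral_comp_eq_if_distr_eq[OF assms borel_measurable_fst_snd(1)]
    integral_comp_eq_if_distr_eq[OF assms borel_measurable_fst_snd(2)] by simp_all

lemma AE_sum_le_one_if_distr_eq:
  fixes U V U0 V0 :: "'a \<Rightarrow> real"
  assumes "distr M borel (\<lambda>\<omega>. (U \<omega>, V \<omega>)) = distr M borel (\<lambda>\<omega>. (U0 \<omega>, V0 \<omega>))"
    and "(\<lambda>\<omega>. (U \<omega>, V \<omega>)) \<in> borel_measurable M" "(\<lambda>\<omega>. (U0 \<omega>, V0 \<omega>)) \<in> borel_measurable M"
    and "AE \<omega> in M. U0 \<omega> + V0 \<omega> \<le> 1"
  shows "AE \<omega> in M. U \<omega> + V \<omega> \<le> 1"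
proof -
  have "closed {p :: real \<times> real. fst p + snd p \<le> 1}"
    by (intro closed_Collect_le continuous_intros)
  then have "{p \<in> space borel. fst p + snd p \<le> (1::real)} \<in> sets borel"
    by simp
  from AE_comp_if_distr_eq[OF assms(1-3) this] assms(4) show ?thesis
    by simp
qed

lemma (in finite_measure) integrable_convex_on_unit_cube_pair:
  fixes U V :: "'n::finite \<Rightarrow> 'a \<Rightarrow> real"
  assumes f: "convex_on unit_cube_pair f"
    and UV: "\<And>i. (\<lambda>\<omega>. (U i \<omega>, V i \<omega>)) \<in> borel_measurable M"
    and range: "\<And>i \<omega>. \<omega> \<in> space M \<Longrightarrow> U i \<omega> \<in> {0..1} \<and> V i \<omega> \<in> {0..1}"
  shows "integrable M (\<lambda>\<omega>. f (\<chi> i. U i \<omega>, \<chi> i. V i \<omega>))"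
proof (rule integrable_convex_on_unit_cube[where f = f])
  show "convex_on (cbox 0 One) f"
    using f by (simp add: unit_cube_pair_eq_cbox)
  show "(\<lambda>\<omega>. (\<chi> i. U i \<omega>, \<chi> i. V i \<omega>)) \<in> borel_measurable M"
    using borel_measurable_pair_components[OF UV] by (intro borel_measurable_Pair borel_measurable_vec_lambda)
  show "\<forall>\<omega>\<in>space M. (\<chi> i. U i \<omega>, \<chi> i. V i \<omega>) \<in> cbox 0 One"
    using range by (simp add: unit_cube_pair_def flip: unit_cube_pair_eq_cbox)
qed

lemma (in prob_space) expectation_barycentric_weight:
  assumes "integrable M U" "integrable M V"
  shows "integrable M (\<lambda>\<omega>. barycentric_weight v (U \<omega>, V \<omega>))"
    and "expectation (\<lambda>\<omega>. barycentric_weight v (U \<omega>, V \<omega>))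
      = barycentric_weight v (expectation U, expectation V)"
  using assms by (simp_all add: barycentric_weight_def algebra_simps prob_space)

lemma (in prob_space) expectation_vertex_interpolant:
  fixes U V :: "'n::finite \<Rightarrow> 'a \<Rightarrow> real"
  assumes indep: "indep_vars (\<lambda>_. borel) (\<lambda>i \<omega>. (U i \<omega>, V i \<omega>)) UNIV"
    and range: "\<And>i \<omega>. \<omega> \<in> space M \<Longrightarrow> U i \<omega> \<in> {0..1} \<and> V i \<omega> \<in> {0..1}"
  shows "integrable M (\<lambda>\<omega>. vertex_interpolant f (\<chi> i. U i \<omega>, \<chi> i. V i \<omega>))"
    and "expectation (\<lambda>\<omega>. vertex_interpolant f (\<chi> i. U i \<omega>, \<chi> i. V i \<omega>))
      = vertex_interpolant f (\<chi> i. expectation (U i), \<chi> i. expectation (V i))"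
proof -
  have UV: "(\<lambda>\<omega>. (U i \<omega>, V i \<omega>)) \<in> borel_measurable M" for i
    using indep by (auto simp: indep_vars_def)
  have "U i \<in> borel_measurable M" "V i \<in> borel_measurable M" for i
    using borel_measurable_pair_components[OF UV] by auto
  then have "integrable M (U i)" "integrable M (V i)" for i
    using range by (auto intro!: integrable_const_bound[where B = 1])
  note weight = expectation_barycentric_weight[OF this]
  have indep_weights: "indep_vars (\<lambda>_. borel) (\<lambda>i \<omega>. barycentric_weight (v i) (U i \<omega>, V i \<omega>)) UNIV" for v
    using indep_vars_compose2[OF indep, of "\<lambda>i. barycentric_weight (v i)" "\<lambda>_. borel"] by simp
  have prod: "integrable M (\<lambda>\<omega>. \<Prod>i\<in>UNIV. barycentric_weight (v i) (U i \<omega>, V i \<omega>))"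
    "expectation (\<lambda>\<omega>. \<Prod>i\<in>UNIV. barycentric_weight (v i) (U i \<omega>, V i \<omega>))
       = (\<Prod>i\<in>UNIV. barycentric_weight (v i) (expectation (U i), expectation (V i)))" for v
    using indep_vars_integrable[OF _ indep_weights] indep_vars_lebesgue_integral[OF _ indep_weights]
    by (simp_all add: weight)
  show "integrable M (\<lambda>\<omega>. vertex_interpolant f (\<chi> i. U i \<omega>, \<chi> i. V i \<omega>))"
    using prod(1) by (simp add: vertex_interpolant_def)
  show "expectation (\<lambda>\<omega>. vertex_interpolant f (\<chi> i. U i \<omega>, \<chi> i. V i \<omega>))
      = vertex_interpolant f (\<chi> i. expectation (U i), \<chi> i. expectation (V i))"
    using prod by (simp add: vertex_interpolant_def)
qed

lemma (in prob_space) expectation_triangle_vertex: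
  assumes Z: "\<forall>\<omega>\<in>space M. Z \<omega> \<in> triangle_vertices"
  shows "expectation (\<lambda>\<omega>. fst (Z \<omega>)) = prob {\<omega> \<in> space M. Z \<omega> = (1, 0)}"
    and "expectation (\<lambda>\<omega>. snd (Z \<omega>)) = prob {\<omega> \<in> space M. Z \<omega> = (0, 1)}"
proof -
  have "expectation (\<lambda>\<omega>. fst (Z \<omega>)) = expectation (indicator {\<omega> \<in> space M. Z \<omega> = (1, 0)})"
    using Z by (intro Bochner_Integration.integral_cong) (auto simp: triangle_vertices_def indicator_def)
  then show "expectation (\<lambda>\<omega>. fst (Z \<omega>)) = prob {\<omega> \<in> space M. Z \<omega> = (1, 0)}"
    by (simp add: Int_absorb2)
  have "expectation (\<lambda>\<omega>. snd (Z \<omega>)) = expectation (indicator {\<omega> \<in> space M. Z \<omega> = (0, 1)})"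
    using Z by (intro Bochner_Integration.integral_cong) (auto simp: triangle_vertices_def indicator_def)
  then show "expectation (\<lambda>\<omega>. snd (Z \<omega>)) = prob {\<omega> \<in> space M. Z \<omega> = (0, 1)}"
    by (simp add: Int_absorb2)
qed

theorem mainTheorem20:
  fixes M :: "'a measure" and N :: "'b measure"
    and X Y :: "'a \<Rightarrow> real" and Xs Ys :: "'n::finite \<Rightarrow> 'a \<Rightarrow> real"
    and X' Y' :: "'b \<Rightarrow> real" and Xs' Ys' :: "'n \<Rightarrow> 'b \<Rightarrow> real"
    and f :: "(real^'n) \<times> (real^'n) \<Rightarrow> real"
  assumes M: "prob_space M"
    and XY_rv: "(\<lambda>\<omega>. (X \<omega>, Y \<omega>)) \<in> borel_measurable M"
    and XY_range: "\<forall>\<omega>\<in>space M. X \<omega> \<in> {0..1} \<and> Y \<omega> \<in> {0..1}"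
    and XY_sum: "AE \<omega> in M. X \<omega> + Y \<omega> \<le> 1"
    and copies_range: "\<forall>i. \<forall>\<omega>\<in>space M. Xs i \<omega> \<in> {0..1} \<and> Ys i \<omega> \<in> {0..1}"
    and copies_indep: "prob_space.indep_vars M (\<lambda>_. borel) (\<lambda>i \<omega>. (Xs i \<omega>, Ys i \<omega>)) UNIV"
    and copies_distr: "\<forall>i. distr M borel (\<lambda>\<omega>. (Xs i \<omega>, Ys i \<omega>)) = distr M borel (\<lambda>\<omega>. (X \<omega>, Y \<omega>))"
    and N: "prob_space N"
    and XY'_rv: "(\<lambda>\<omega>. (X' \<omega>, Y' \<omega>)) \<in> borel_measurable N"
    and XY'_range: "\<forall>\<omega>\<in>space N. (X' \<omega>, Y' \<omega>) \<in> {(1, 0), (0, 1), (0, 0)}"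
    and XY'_10: "measure N {\<omega> \<in> space N. (X' \<omega>, Y' \<omega>) = (1, 0)} = integral\<^sup>L M X"
    and XY'_01: "measure N {\<omega> \<in> space N. (X' \<omega>, Y' \<omega>) = (0, 1)} = integral\<^sup>L M Y"
    and XY'_00: "measure N {\<omega> \<in> space N. (X' \<omega>, Y' \<omega>) = (0, 0)} = 1 - integral\<^sup>L M X - integral\<^sup>L M Y"
    and copies'_range: "\<forall>i. \<forall>\<omega>\<in>space N. (Xs' i \<omega>, Ys' i \<omega>) \<in> {(1, 0), (0, 1), (0, 0)}"
    and copies'_indep: "prob_space.indep_vars N (\<lambda>_. borel) (\<lambda>i \<omega>. (Xs' i \<omega>, Ys' i \<omega>)) UNIV"
    and copies'_distr: "\<forall>i. distr N borel (\<lambda>\<omega>. (Xs' i \<omega>, Ys' i \<omega>)) = distr N borel (\<lambda>\<omega>. (X' \<omega>, Y' \<omega>))"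
    and f_convex: "convex_on unit_cube_pair f"
  shows "(\<integral>\<omega>. f (\<chi> i. Xs i \<omega>, \<chi> i. Ys i \<omega>) \<partial>M)
           \<le> (\<integral>\<omega>. f (\<chi> i. Xs' i \<omega>, \<chi> i. Ys' i \<omega>) \<partial>N)"
proof -
  interpret M: prob_space M by (rule M)
  interpret N: prob_space N by (rule N)
  have XY_i: "(\<lambda>\<omega>. (Xs i \<omega>, Ys i \<omega>)) \<in> borel_measurable M" for i
    using copies_indep by (auto simp: M.indep_vars_def)
  have XY'_i: "(\<lambda>\<omega>. (Xs' i \<omega>, Ys' i \<omega>)) \<in> borel_measurable N" for i
    using copies'_indep by (auto simp: N.indep_vars_def)
  have vertex_copies: "\<forall>\<omega>\<in>space N. (Xs' i \<omega>, Ys' i \<omega>) \<in> triangle_vertices" for i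
    using copies'_range by (simp add: triangle_vertices_def)
  have copies'_range_01: "Xs' i \<omega> \<in> {0..1} \<and> Ys' i \<omega> \<in> {0..1}" if "\<omega> \<in> space N" for i \<omega>
    using triangle_vertex_unit_interval vertex_copies that by fastforce
  note means = integral_components_eq_if_distr_eq[OF copies_distr[rule_format] XY_i XY_rv]
  note means' = integral_components_eq_if_distr_eq[OF copies'_distr[rule_format] XY'_i XY'_rv]
  have vertex_means: "N.expectation X' = M.expectation X" "N.expectation Y' = M.expectation Y"
    using N.expectation_triangle_vertex[OF XY'_range[folded triangle_vertices_def]] XY'_10 XY'_01
    by simp_all
  have in_triangles: "AE \<omega> in M. \<forall>i. Xs i \<omega> + Ys i \<omega> \<le> 1"
    using AE_sum_le_one_if_distr_eq[OF copies_distr[rule_format] XY_i XY_rv XY_sum]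
    by (simp add: AE_all_countable)
  have "(\<integral>\<omega>. f (\<chi> i. Xs i \<omega>, \<chi> i. Ys i \<omega>) \<partial>M)
      \<le> (\<integral>\<omega>. vertex_interpolant f (\<chi> i. Xs i \<omega>, \<chi> i. Ys i \<omega>) \<partial>M)"
  proof (rule integral_mono_AE)
    show "integrable M (\<lambda>\<omega>. f (\<chi> i. Xs i \<omega>, \<chi> i. Ys i \<omega>))"
      by (rule M.integrable_convex_on_unit_cube_pair[OF f_convex XY_i copies_range[rule_format]])
    show "integrable M (\<lambda>\<omega>. vertex_interpolant f (\<chi> i. Xs i \<omega>, \<chi> i. Ys i \<omega>))"
      by (rule M.expectation_vertex_interpolant(1)[OF copies_indep copies_range[rule_format]])
    show "AE \<omega> in M. f (\<chi> i. Xs i \<omega>, \<chi> i. Ys i \<omega>) \<le> vertex_interpolant f (\<chi> i. Xs i \<omega>, \<chi> i. Ys i \<omega>)"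
      using in_triangles AE_space
      by eventually_elim (use copies_range in \<open>auto intro!: convex_on_le_vertex_interpolant[OF f_convex]\<close>)
  qed
  also have "\<dots> = vertex_interpolant f (\<chi> _. M.expectation X, \<chi> _. M.expectation Y)"
    using M.expectation_vertex_interpolant(2)[OF copies_indep copies_range[rule_format]] by (simp add: means)
  also have "\<dots> = (\<integral>\<omega>. vertex_interpolant f (\<chi> i. Xs' i \<omega>, \<chi> i. Ys' i \<omega>) \<partial>N)"
    using N.expectation_vertex_interpolant(2)[OF copies'_indep copies'_range_01] by (simp add: means' vertex_means)
  also have "\<dots> = (\<integral>\<omega>. f (\<chi> i. Xs' i \<omega>, \<chi> i. Ys' i \<omega>) \<partial>N)"
    using vertex_copies by (intro Bochner_Integration.integral_cong) (auto intro!: vertex_interpolant_at_vertex)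
  finally show ?thesis .
qed

end
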